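(* For $d\ge2$, the permutation $\pi=(d,d-1,\dots,2,1)$ on $\mathcal{A}=\{a_1,\dots,a_d\}$ given by $\pi_0(a_i)=i$, $\pi_1(a_i)=d+1-i$, is transposition Lagrangian: the vectors $\mathbf{v}_{\mathcal{B}}$, $\mathcal{B}$ ranging over the orbits of size two of $\pi_{\mathcal{A}}$, span a subspace of dimension equal to the number of such orbits, and this number equals $g(\pi)$.
   Context: For $\pi=(\pi_0,\pi_1)$, define $\Omega=\Omega_\pi$ by $\Omega_{\alpha,\beta}=1$ if $\pi_0(\alpha)<\pi_0(\beta)$ and $\pi_1(\alpha)>\pi_1(\beta)$, $-1$ if $\pi_0(\alpha)>\pi_0(\beta)$ and $\pi_1(\alpha)<\pi_1(\beta)$, $0$ otherwise; $g(\pi)=\tfrac12\mathrm{rank}(\Omega_\pi)$ (the genus). Let $\pi_{\mathcal{A}}=\pi_0^{-1}\circ\pi_1:\mathcal{A}\to\mathcal{A}$, $\mathbf{e}_{\mathcal{B}}=\sum_{\alpha\in\mathcal{B}}\mathbf{e}_\alpha$ and $\mathbf{v}_{\mathcal{B}}=\Omega\mathbf{e}_{\mathcal{B}}$. A self-inverse $\pi$ is transposition Lagrangian if $\dim\mathrm{span}\{\mathbf{v}_{\mathcal{B}}:\#\mathcal{B}=2\}=\#\{\text{orbits }\mathcal{B}\text{ with }\#\mathcal{B}=2\}=g(\pi)$. *)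

theory Defs
  imports "Jordan_Normal_Form.DL_Rank"
begin

text \<open>Alphabet: the letters are indexed by 0..<d (index i stands for letter a_(i+1)).
  A permutation pi = (pi0, pi1) is a pair of maps from letters to positions {1..d}.\<close>

definition Omega_mat :: "nat \<Rightarrow> (nat \<Rightarrow> nat) \<Rightarrow> (nat \<Rightarrow> nat) \<Rightarrow> real mat" where
  "Omega_mat d p0 p1 = mat d d (\<lambda>(a, b).
     if p0 a < p0 b \<and> p1 a > p1 b then 1
     else if p0 a > p0 b \<and> p1 a < p1 b then -1 else 0)"

definition genus :: "nat \<Rightarrow> (nat \<Rightarrow> nat) \<Rightarrow> (nat \<Rightarrow> nat) \<Rightarrow> real" where
  "genus d p0 p1 = real (vec_space.rank d (Omega_mat d p0 p1)) / 2"

definition piA :: "nat \<Rightarrow> (nat \<Rightarrow> nat) \<Rightarrow> (nat \<Rightarrow> nat) \<Rightarrow> nat \<Rightarrow> nat" where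
  "piA d p0 p1 = inv_into {0..<d} p0 \<circ> p1"

definition orbit_of :: "(nat \<Rightarrow> nat) \<Rightarrow> nat \<Rightarrow> nat set" where
  "orbit_of f a = {(f ^^ k) a | k. True}"

definition orbits :: "nat \<Rightarrow> (nat \<Rightarrow> nat) \<Rightarrow> (nat \<Rightarrow> nat) \<Rightarrow> nat set set" where
  "orbits d p0 p1 = orbit_of (piA d p0 p1) ` {0..<d}"

definition two_orbits :: "nat \<Rightarrow> (nat \<Rightarrow> nat) \<Rightarrow> (nat \<Rightarrow> nat) \<Rightarrow> nat set set" where
  "two_orbits d p0 p1 = {B \<in> orbits d p0 p1. card B = 2}"

definition e_set :: "nat \<Rightarrow> nat set \<Rightarrow> real vec" where
  "e_set d B = vec d (\<lambda>i. if i \<in> B then 1 else 0)"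

definition v_set :: "nat \<Rightarrow> (nat \<Rightarrow> nat) \<Rightarrow> (nat \<Rightarrow> nat) \<Rightarrow> nat set \<Rightarrow> real vec" where
  "v_set d p0 p1 B = Omega_mat d p0 p1 *\<^sub>v e_set d B"

definition span_dim :: "nat \<Rightarrow> real vec set \<Rightarrow> nat" where
  "span_dim d S = vectorspace.dim class_ring
      (LinearCombinations.module.span_vs class_ring (module_vec TYPE(real) d) S)"

definition self_inverse :: "nat \<Rightarrow> (nat \<Rightarrow> nat) \<Rightarrow> (nat \<Rightarrow> nat) \<Rightarrow> bool" where
  "self_inverse d p0 p1 \<longleftrightarrow> (\<forall>a<d. piA d p0 p1 (piA d p0 p1 a) = a)"

definition transposition_Lagrangian :: "nat \<Rightarrow> (nat \<Rightarrow> nat) \<Rightarrow> (nat \<Rightarrow> nat) \<Rightarrow> bool" where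
  "transposition_Lagrangian d p0 p1 \<longleftrightarrow>
     self_inverse d p0 p1 \<and>
     span_dim d (v_set d p0 p1 ` two_orbits d p0 p1) = card (two_orbits d p0 p1) \<and>
     real (card (two_orbits d p0 p1)) = genus d p0 p1"

end

theory Submission
  imports Defs
begin

text \<open>Number the letters 0, ..., d-1. For the reversal permutation, Omega(i,j) = sgn (j - i)
  and pi_A is the reflection a \<mapsto> d-1-a, whose orbits of size two are the pairs
  {a, d-1-a} with a < d div 2. If Omega x = 0, subtracting consecutive rows gives
  x(i) + x(i+1) = 0; since an alternating sum of even length vanishes, the first k
  columns are independent for every even k \<le> d. As Omega is skew-symmetric it is singular
  for odd d, so rank Omega = 2 (d div 2) and g(pi) = d div 2. Finally v_{a, d-1-a} is the
  sum of columns a and d-1-a; on the first d div 2 rows these vectors form a triangular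
  matrix with unit diagonal, so they are independent as well.\<close>

lemma det_skew_symmetric_odd:
  fixes A :: "'a :: {idom, ring_char_0} mat"
  assumes A: "A \<in> carrier_mat n n" and skew: "transpose_mat A = (-1) \<cdot>\<^sub>m A" and "odd n"
  shows "det A = 0"
proof -
  have "det A = det ((-1) \<cdot>\<^sub>m A)" using det_transpose[OF A] skew by simp
  also have "\<dots> = - det A" using A \<open>odd n\<close> by simp
  finally show ?thesis by simp
qed

lemma (in vec_space) lin_indpt_cols_if_ker_trivial:
  assumes A: "A \<in> carrier_mat n nc"
    and ker: "\<And>x. x \<in> carrier_vec nc \<Longrightarrow> A *\<^sub>v x = 0\<^sub>v n \<Longrightarrow> x = 0\<^sub>v nc"
  shows "distinct (cols A)" "lin_indpt (set (cols A))"
proof -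
  show dist: "distinct (cols A)"
  proof (rule ccontr)
    assume "\<not> distinct (cols A)"
    then obtain i j where ij: "i < nc" "j < nc" "i \<noteq> j" "col A i = col A j"
      using A by (auto simp: distinct_conv_nth)
    define x :: "'a vec" where "x = unit_vec nc i - unit_vec nc j"
    have "A *\<^sub>v x = 0\<^sub>v n"
    proof (rule eq_vecI)
      fix r assume "r < dim_vec (0\<^sub>v n :: 'a vec)"
      then have r: "r < n" by simp
      have "A $$ (r, i) = A $$ (r, j)"
        using arg_cong[OF ij(4), of "\<lambda>v. v $ r"] A r ij(1,2) by auto
      then show "(A *\<^sub>v x) $ r = 0\<^sub>v n $ r"
        using A r ij unfolding x_def
        by (simp add: scalar_prod_def right_diff_distrib sum_subtractf if_distrib[of "(*) _"]
            cong: if_cong)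
    qed (use A in simp)
    moreover have "x \<in> carrier_vec nc" "x $ i = 1"
      using ij unfolding x_def by simp_all
    ultimately show False using ker ij(1) by fastforce
  qed
  show "lin_indpt (set (cols A))"
  proof
    assume "lin_dep (set (cols A))"
    then obtain v where "v \<in> carrier_vec nc" "v \<noteq> 0\<^sub>v nc" "A *\<^sub>v v = 0\<^sub>v n"
      using lin_depE[OF A _ dist] by blast
    then show False using ker by blast
  qed
qed

definition order_sign :: "nat \<Rightarrow> nat \<Rightarrow> real" where
  "order_sign i j = (if i < j then 1 else if j < i then -1 else 0)"

definition sign_mat :: "nat \<Rightarrow> nat \<Rightarrow> real mat" where
  "sign_mat n k = mat n k (\<lambda>(i, j). order_sign i j)"

lemma sign_mat_carrier [simp]: "sign_mat n k \<in> carrier_mat n k"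
  unfolding sign_mat_def by simp

lemma sum_neg_one_power_even: "(\<Sum>j<2 * n. (-1::'a::ring_1) ^ j) = 0"
  by (induction n) (auto simp: power_add)

lemma sign_mat_mult_vec_eq_zero:
  assumes "k \<le> n" "even k" "x \<in> carrier_vec k"
    and zero: "sign_mat n k *\<^sub>v x = 0\<^sub>v n"
  shows "x = 0\<^sub>v k"
proof -
  define S where "S i = (\<Sum>j<k. order_sign i j * x $ j)" for i
  have S_zero: "S i = 0" if "i < n" for i
  proof -
    have "(sign_mat n k *\<^sub>v x) $ i = 0" using zero that by simp
    then show ?thesis
      using assms(3) that by (simp add: S_def sign_mat_def scalar_prod_def lessThan_atLeast0)
  qed
  have S_diff: "S i - S (Suc i) = x $ i + x $ Suc i" if "Suc i < k" for i
  proof -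
    have "S i - S (Suc i) = (\<Sum>j<k. (order_sign i j - order_sign (Suc i) j) * x $ j)"
      unfolding S_def by (simp add: sum_subtractf algebra_simps)
    also have "\<dots> = (\<Sum>j<k. (if j = i then x $ i else 0) + (if j = Suc i then x $ Suc i else 0))"
      by (rule sum.cong) (auto simp: order_sign_def)
    also have "\<dots> = x $ i + x $ Suc i"
      using that by (simp add: sum.distrib)
    finally show ?thesis .
  qed
  have alternating: "x $ j = (-1) ^ j * x $ 0" if "j < k" for j
    using that
  proof (induction j)
    case (Suc j)
    then have "x $ Suc j = - x $ j"
      using S_diff[OF Suc.prems] S_zero[of j] S_zero[of "Suc j"] assms(1) by simp
    with Suc show ?case by simp
  qed simp
  have first_zero: "x $ 0 = 0" if "0 < k"
  proof -
    have "S 0 = (\<Sum>j<k. (-1) ^ j * x $ 0 - (if j = 0 then x $ 0 else 0))"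
      unfolding S_def
    proof (rule sum.cong)
      fix j assume "j \<in> {..<k}"
      then show "order_sign 0 j * x $ j = (-1) ^ j * x $ 0 - (if j = 0 then x $ 0 else 0)"
        using alternating[of j] by (cases "j = 0") (simp_all add: order_sign_def)
    qed simp
    also have "\<dots> = (\<Sum>j<k. (-1::real) ^ j) * x $ 0 - x $ 0"
      using that by (simp add: sum_subtractf sum_distrib_right)
    also have "\<dots> = - x $ 0"
      using \<open>even k\<close> sum_neg_one_power_even by (auto elim!: evenE)
    finally show ?thesis using S_zero[of 0] that assms(1) by simp
  qed
  show ?thesis
    by (rule eq_vecI) (use assms(3) alternating first_zero in auto)
qed

lemma rank_sign_mat_ge:
  assumes "k \<le> n" "even k"
  shows "k \<le> vec_space.rank n (sign_mat n n)"
proof -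
  interpret vec_space "TYPE(real)" n .
  have indpt: "distinct (cols (sign_mat n k))" "lin_indpt (set (cols (sign_mat n k)))"
    using lin_indpt_cols_if_ker_trivial[OF sign_mat_carrier sign_mat_mult_vec_eq_zero[OF assms]]
    by auto
  have "set (cols (sign_mat n k)) \<subseteq> set (cols (sign_mat n n))"
  proof
    fix w assume "w \<in> set (cols (sign_mat n k))"
    then obtain j where "j < k" "w = col (sign_mat n k) j"
      by (metis carrier_matD(2) cols_length cols_nth in_set_conv_nth sign_mat_carrier)
    then have "j < n" "w = cols (sign_mat n n) ! j"
      using assms(1) by (auto simp: sign_mat_def)
    then show "w \<in> set (cols (sign_mat n n))"
      by (metis nth_mem cols_length carrier_matD(2) sign_mat_carrier)
  qed
  moreover have "card (set (cols (sign_mat n k))) = k"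
    using distinct_card[OF indpt(1)] by (simp add: sign_mat_def)
  ultimately show ?thesis
    using rank_ge_card_indpt[OF sign_mat_carrier _ indpt(2)] by metis
qed

lemma rank_sign_mat: "vec_space.rank n (sign_mat n n) = 2 * (n div 2)"
proof -
  interpret vec_space "TYPE(real)" n .
  have lower: "2 * (n div 2) \<le> rank (sign_mat n n)"
    by (rule rank_sign_mat_ge) auto
  show ?thesis
  proof (cases "even n")
    case True
    then show ?thesis using lower rank_le_nc[OF sign_mat_carrier[of n n]] by simp
  next
    case False
    have "transpose_mat (sign_mat n n) = (-1) \<cdot>\<^sub>m sign_mat n n"
      by (rule eq_matI) (auto simp: sign_mat_def order_sign_def)
    then have "det (sign_mat n n) = 0"
      using det_skew_symmetric_odd[OF sign_mat_carrier _ False] by blast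
    then have "rank (sign_mat n n) < n"
      using det_zero_low_rank[OF sign_mat_carrier] by blast
    with lower False show ?thesis by presburger
  qed
qed

lemma mult_vec_e_set_pair:
  assumes A: "A \<in> carrier_mat m n" and "a < n" "b < n" "a \<noteq> b"
  shows "A *\<^sub>v e_set n {a, b} = col A a + col A b"
proof (rule eq_vecI)
  fix i assume "i < dim_vec (col A a + col A b)"
  then have i: "i < m" using A by simp
  have "(A *\<^sub>v e_set n {a, b}) $ i
      = (\<Sum>j\<in>{0..<n}. A $$ (i, j) * (if j \<in> {a, b} then 1 else 0))"
    using A i by (simp add: e_set_def scalar_prod_def)
  also have "\<dots> = (\<Sum>j\<in>{0..<n}. (if j = a then A $$ (i, a) else 0)
      + (if j = b then A $$ (i, b) else 0))"
    by (rule sum.cong) (use assms(4) in auto)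
  also have "\<dots> = (col A a + col A b) $ i"
    using A i assms(2,3) by (simp add: sum.distrib)
  finally show "(A *\<^sub>v e_set n {a, b}) $ i = (col A a + col A b) $ i" .
qed (use A in \<open>simp add: e_set_def\<close>)

lemma Omega_mat_reversal: "Omega_mat d Suc (\<lambda>i. d - i) = sign_mat d d"
  unfolding Omega_mat_def sign_mat_def
  by (rule eq_matI) (auto simp: order_sign_def)

lemma genus_reversal: "genus d Suc (\<lambda>i. d - i) = real (d div 2)"
  unfolding genus_def Omega_mat_reversal rank_sign_mat by simp

lemma piA_reversal: "a < d \<Longrightarrow> piA d Suc (\<lambda>i. d - i) a = d - 1 - a"
  unfolding piA_def by (auto intro!: inv_into_f_eq simp: inj_on_def)

lemma self_inverse_reversal: "self_inverse d Suc (\<lambda>i. d - i)"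
  unfolding self_inverse_def by (auto simp: piA_reversal)

lemma funpow_piA_reversal:
  "a < d \<Longrightarrow> (piA d Suc (\<lambda>i. d - i) ^^ k) a = (if even k then a else d - 1 - a)"
  by (induction k) (auto simp: piA_reversal)

lemma orbit_of_reversal:
  assumes a: "a < d"
  shows "orbit_of (piA d Suc (\<lambda>i. d - i)) a = {a, d - 1 - a}"
proof
  show "orbit_of (piA d Suc (\<lambda>i. d - i)) a \<subseteq> {a, d - 1 - a}"
    unfolding orbit_of_def using funpow_piA_reversal[OF a] by auto
  have "(piA d Suc (\<lambda>i. d - i) ^^ 0) a \<in> orbit_of (piA d Suc (\<lambda>i. d - i)) a"
    "(piA d Suc (\<lambda>i. d - i) ^^ 1) a \<in> orbit_of (piA d Suc (\<lambda>i. d - i)) a"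
    unfolding orbit_of_def by blast+
  then show "{a, d - 1 - a} \<subseteq> orbit_of (piA d Suc (\<lambda>i. d - i)) a"
    using funpow_piA_reversal[OF a, of 1] by simp
qed

lemma two_orbits_reversal:
  "two_orbits d Suc (\<lambda>i. d - i) = (\<lambda>a. {a, d - 1 - a}) ` {..<d div 2}"
proof -
  have "two_orbits d Suc (\<lambda>i. d - i) = {B \<in> (\<lambda>a. {a, d - 1 - a}) ` {..<d}. card B = 2}"
    unfolding two_orbits_def orbits_def atLeast0LessThan
    by (subst image_cong[OF refl orbit_of_reversal]) auto
  also have "\<dots> = (\<lambda>a. {a, d - 1 - a}) ` {..<d div 2}"
  proof (intro equalityI subsetI)
    fix B assume "B \<in> {B \<in> (\<lambda>a. {a, d - 1 - a}) ` {..<d}. card B = 2}"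
    then obtain a where a: "a < d" "B = {a, d - 1 - a}" "card B = 2"
      by auto
    then have "a \<noteq> d - 1 - a" by auto
    show "B \<in> (\<lambda>a. {a, d - 1 - a}) ` {..<d div 2}"
    proof (cases "a < d div 2")
      case False
      then have "d - 1 - a < d div 2" "B = {d - 1 - a, d - 1 - (d - 1 - a)}"
        using a \<open>a \<noteq> d - 1 - a\<close> by auto
      then show ?thesis by blast
    qed (use a in auto)
  qed auto
  finally show ?thesis .
qed

lemma card_two_orbits_reversal: "card (two_orbits d Suc (\<lambda>i. d - i)) = d div 2"
proof -
  have "inj_on (\<lambda>a. {a, d - 1 - a}) {..<d div 2}"
    by (rule inj_onI) (auto simp: doubleton_eq_iff)
  then show ?thesis unfolding two_orbits_reversal by (simp add: card_image)
qed

definition folded_sign_mat :: "nat \<Rightarrow> real mat" where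
  "folded_sign_mat d = mat d (d div 2) (\<lambda>(i, a). order_sign i a + order_sign i (d - 1 - a))"

lemma folded_sign_mat_carrier [simp]: "folded_sign_mat d \<in> carrier_mat d (d div 2)"
  unfolding folded_sign_mat_def by simp

lemma v_set_reversal:
  assumes "a < d div 2"
  shows "v_set d Suc (\<lambda>i. d - i) {a, d - 1 - a} = col (folded_sign_mat d) a"
proof -
  have "v_set d Suc (\<lambda>i. d - i) {a, d - 1 - a}
      = col (sign_mat d d) a + col (sign_mat d d) (d - 1 - a)"
    unfolding v_set_def Omega_mat_reversal using assms
    by (intro mult_vec_e_set_pair[OF sign_mat_carrier]) auto
  then show ?thesis
    using assms by (auto simp: sign_mat_def folded_sign_mat_def intro!: eq_vecI)
qed

text \<open>For a, b < d div 2 the entry at (a, b) is 0, 1, 2 according as b < a, b = a, b > a,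
  so the rows a = d div 2 - 1, ..., 0 successively force x(a) = 0.\<close>
lemma folded_sign_mat_mult_vec_eq_zero:
  assumes x: "x \<in> carrier_vec (d div 2)" and zero: "folded_sign_mat d *\<^sub>v x = 0\<^sub>v d"
  shows "x = 0\<^sub>v (d div 2)"
proof -
  define m where "m = d div 2"
  have "x $ a = 0" if "a < m" for a
    using that
  proof (induction "m - a" arbitrary: a rule: less_induct)
    case less
    have "0 = (folded_sign_mat d *\<^sub>v x) $ a"
      using zero less.prems by (simp add: m_def)
    also have "\<dots> = (\<Sum>b\<in>{0..<m}. (order_sign a b + order_sign a (d - 1 - b)) * x $ b)"
      using x less.prems by (simp add: folded_sign_mat_def scalar_prod_def m_def)
    also have "\<dots> = (\<Sum>b\<in>{0..<m}. if b = a then x $ a else 0)"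
    proof (rule sum.cong)
      fix b assume b: "b \<in> {0..<m}"
      have "order_sign a (d - 1 - b) = 1"
        using b less.prems by (simp add: order_sign_def m_def)
      moreover have "x $ b = 0" if "a < b"
        using less.hyps[of b] b less.prems that by auto
      ultimately show "(order_sign a b + order_sign a (d - 1 - b)) * x $ b
          = (if b = a then x $ a else 0)"
        by (auto simp: order_sign_def)
    qed simp
    also have "\<dots> = x $ a" using less.prems by simp
    finally show ?case by simp
  qed
  then show ?thesis
    by (intro eq_vecI) (use x in \<open>auto simp: m_def\<close>)
qed

lemma span_dim_reversal:
  "span_dim d (v_set d Suc (\<lambda>i. d - i) ` two_orbits d Suc (\<lambda>i. d - i)) = d div 2"
proof -
  interpret vec_space "TYPE(real)" d .
  have "v_set d Suc (\<lambda>i. d - i) ` two_orbits d Suc (\<lambda>i. d - i)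
      = col (folded_sign_mat d) ` {..<d div 2}"
    unfolding two_orbits_reversal image_image by (intro image_cong refl v_set_reversal) simp
  also have "\<dots> = set (cols (folded_sign_mat d))"
    by (simp add: cols_def lessThan_atLeast0 folded_sign_mat_def)
  finally have vectors: "v_set d Suc (\<lambda>i. d - i) ` two_orbits d Suc (\<lambda>i. d - i)
      = set (cols (folded_sign_mat d))" .
  have "rank (folded_sign_mat d) = d div 2"
    using lin_indpt_cols_if_ker_trivial[OF folded_sign_mat_carrier folded_sign_mat_mult_vec_eq_zero]
    by (intro lin_indpt_full_rank[OF folded_sign_mat_carrier]) auto
  then show ?thesis
    unfolding vectors span_dim_def rank_def .
qed

theorem mainTheorem10:
  fixes d :: nat
  assumes "d \<ge> 2"
  shows "transposition_Lagrangian d (\<lambda>i. i + 1) (\<lambda>i. d - i)"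
proof -
  have "(\<lambda>i::nat. i + 1) = Suc" by auto
  then show ?thesis
    unfolding transposition_Lagrangian_def
    using self_inverse_reversal span_dim_reversal card_two_orbits_reversal genus_reversal
    by simp
qed

end
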